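(* Let $G$ be a finite group acting on a set $S$ via $\bullet: G\times S\to S$ (so $(gh)\bullet x=g\bullet(h\bullet x)$), and let $F\le H\trianglelefteq G$. Let $A$ be a randomized algorithm which takes a list of elements of $G$ and outputs an element of $S$. Define the randomized algorithm $B$ on input $g_1,\dots,g_n\in G$ ($n\ge 2$): sample $f$ uniformly from $F$, compute $(g_1',\dots,g_n')\gets\textsc{Kilian}_H(fg_1,g_2,\dots,g_n)$, and return $f^{-1}\bullet A(g_1',\dots,g_n')$. Then the output distribution of $B(g_1,\dots,g_n)$ is $(g_1\cdots g_n)\bullet\mathcal D$, where $\mathcal D=\mathcal D(Fg_1\cdots g_n,g_1H,\dots,g_nH)$ is the uniform average, over all tuples $(g_1',\dots,g_n')\in G^n$ with $g_1'\cdots g_n'\in Fg_1\cdots g_n$ and $g_i'H=g_iH$ for all $i$, of the distribution of $(g_1'\cdots g_n')^{-1}\bullet A(g_1',\dots,g_n')$.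
   Context: $\textsc{Kilian}_H(g_1,\dots,g_n)$ (for $H\trianglelefteq G$, $n\ge 2$): sample $h_1,\dots,h_{n-1}$ independently and uniformly from $H$; set $g_1'=g_1h_1$, $g_i'=h_{i-1}^{-1}g_ih_i$ for $i=2,\dots,n-1$, and $g_n'=h_{n-1}^{-1}g_n$; return $(g_1',\dots,g_n')$. For a distribution $\mathcal D$ on $S$ and $g\in G$, $g\bullet\mathcal D$ denotes the distribution of $g\bullet x$ for $x\sim\mathcal D$. *)

theory Defs
  imports "HOL-Algebra.Group_Action" "HOL-Algebra.Coset" "HOL-Probability.Product_PMF"
begin

definition gprod :: "('g, 'b) monoid_scheme \<Rightarrow> 'g list \<Rightarrow> 'g" where
  "gprod G gs = foldr (\<lambda>a b. a \<otimes>\<^bsub>G\<^esub> b) gs \<one>\<^bsub>G\<^esub>"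

definition kilian :: "('g, 'b) monoid_scheme \<Rightarrow> 'g set \<Rightarrow> 'g list \<Rightarrow> 'g list pmf" where
  "kilian G H gs =
     map_pmf (\<lambda>hs. map (\<lambda>i.
         if i = 0 then (gs ! 0) \<otimes>\<^bsub>G\<^esub> hs 0
         else if i = length gs - 1 then inv\<^bsub>G\<^esub> (hs (i - 1)) \<otimes>\<^bsub>G\<^esub> (gs ! i)
         else inv\<^bsub>G\<^esub> (hs (i - 1)) \<otimes>\<^bsub>G\<^esub> (gs ! i) \<otimes>\<^bsub>G\<^esub> hs i)
       [0..<length gs])
     (Pi_pmf {..<length gs - 1} \<one>\<^bsub>G\<^esub> (\<lambda>_. pmf_of_set H))"

definition algB :: "('g, 'b) monoid_scheme \<Rightarrow> 'g set \<Rightarrow> 'g set \<Rightarrow> ('g \<Rightarrow> 's \<Rightarrow> 's)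
    \<Rightarrow> ('g list \<Rightarrow> 's pmf) \<Rightarrow> 'g list \<Rightarrow> 's pmf" where
  "algB G F H act A gs =
     do { f \<leftarrow> pmf_of_set F;
          gs' \<leftarrow> kilian G H ((f \<otimes>\<^bsub>G\<^esub> hd gs) # tl gs);
          map_pmf (act (inv\<^bsub>G\<^esub> f)) (A gs') }"

definition kil_tuples :: "('g, 'b) monoid_scheme \<Rightarrow> 'g set \<Rightarrow> 'g set \<Rightarrow> 'g list \<Rightarrow> 'g list set" where
  "kil_tuples G F H gs = {gs'. length gs' = length gs \<and> set gs' \<subseteq> carrier G \<and>
      gprod G gs' \<in> F #>\<^bsub>G\<^esub> gprod G gs \<and>
      (\<forall>i < length gs. (gs' ! i) <#\<^bsub>G\<^esub> H = (gs ! i) <#\<^bsub>G\<^esub> H)}"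

definition distD :: "('g, 'b) monoid_scheme \<Rightarrow> 'g set \<Rightarrow> 'g set \<Rightarrow> ('g \<Rightarrow> 's \<Rightarrow> 's)
    \<Rightarrow> ('g list \<Rightarrow> 's pmf) \<Rightarrow> 'g list \<Rightarrow> 's pmf" where
  "distD G F H act A gs =
     do { gs' \<leftarrow> pmf_of_set (kil_tuples G F H gs);
          map_pmf (act (inv\<^bsub>G\<^esub> (gprod G gs'))) (A gs') }"

end

theory Submission
  imports Defs
begin

(* Fix f in F.  Kilian_H(f g_1, g_2, ..., g_n) is the tuple (k_0^-1 g_1 k_1, ..., k_(n-1)^-1 g_n k_n)
  with k_0 = f^-1, k_n = 1 and k_1, ..., k_(n-1) independent and uniform in H.  Its product
  telescopes to f g_1...g_n, and since H is normal its i-th entry lies in g_i H.  Conversely, a tuple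
  g' with these cosets and with product f g_1...g_n determines the k_i one after the other through
  k_(i+1) = g_i^-1 k_i g'_i, and the last one is forced to be 1.  Hence (f, k_1, ..., k_(n-1)) uniform
  on F x H^(n-1) is pushed forward bijectively to the uniform distribution on the admissible tuples,
  and f^-1 = (g_1...g_n) (g'_1...g'_n)^-1 rewrites the output f^-1 . A(g') as
  (g_1...g_n) . ((g'_1...g'_n)^-1 . A(g')). *)

lemma pair_pmf_of_set:
  assumes "finite A" "A \<noteq> {}" "finite B" "B \<noteq> {}"
  shows "pair_pmf (pmf_of_set A) (pmf_of_set B) = pmf_of_set (A \<times> B)"
  using assms by (intro pmf_eqI) (clarsimp simp: pmf_pair pmf_of_set card_cartesian_product indicator_def)

lemma bind_pmf_of_set_bij_betw:
  assumes "bij_betw (\<lambda>(a, b). g a b) (A \<times> B) C"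
    and "finite A" "A \<noteq> {}" "finite B" "B \<noteq> {}"
  shows "pmf_of_set A \<bind> (\<lambda>a. pmf_of_set B \<bind> (\<lambda>b. D (g a b))) = pmf_of_set C \<bind> D"
proof -
  have "pmf_of_set A \<bind> (\<lambda>a. pmf_of_set B \<bind> (\<lambda>b. D (g a b)))
      = pair_pmf (pmf_of_set A) (pmf_of_set B) \<bind> (\<lambda>(a, b). D (g a b))"
    by (simp add: pair_pmf_def bind_assoc_pmf bind_return_pmf)
  also have "\<dots> = map_pmf (\<lambda>(a, b). g a b) (pmf_of_set (A \<times> B)) \<bind> D"
    using assms(2-) by (simp add: pair_pmf_of_set bind_map_pmf case_prod_beta')
  also have "\<dots> = pmf_of_set C \<bind> D"
    using assms by (simp add: map_pmf_of_set_bij_betw)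
  finally show ?thesis .
qed

definition kilian_twist :: "('g, 'b) monoid_scheme \<Rightarrow> 'g list \<Rightarrow> (nat \<Rightarrow> 'g) \<Rightarrow> 'g list" where
  "kilian_twist G gs k = map (\<lambda>i. inv\<^bsub>G\<^esub> (k i) \<otimes>\<^bsub>G\<^esub> gs ! i \<otimes>\<^bsub>G\<^esub> k (Suc i)) [0..<length gs]"

lemma length_kilian_twist [simp]: "length (kilian_twist G gs k) = length gs"
  by (simp add: kilian_twist_def)

lemma nth_kilian_twist [simp]:
  "i < length gs \<Longrightarrow> kilian_twist G gs k ! i = inv\<^bsub>G\<^esub> (k i) \<otimes>\<^bsub>G\<^esub> gs ! i \<otimes>\<^bsub>G\<^esub> k (Suc i)"
  by (simp add: kilian_twist_def)

lemma kilian_twist_cong: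
  "(\<And>j. j \<le> length gs \<Longrightarrow> k j = k' j) \<Longrightarrow> kilian_twist G gs k = kilian_twist G gs k'"
  by (simp add: kilian_twist_def)

context group
begin

lemma inv_cancel_left: "x \<in> carrier G \<Longrightarrow> y \<in> carrier G \<Longrightarrow> x \<otimes> (inv x \<otimes> y) = y"
  by (simp add: m_assoc[symmetric])

lemma inv_cancel_left': "x \<in> carrier G \<Longrightarrow> y \<in> carrier G \<Longrightarrow> inv x \<otimes> (x \<otimes> y) = y"
  by (simp add: m_assoc[symmetric])

lemma gprod_closed: "set xs \<subseteq> carrier G \<Longrightarrow> gprod G xs \<in> carrier G"
  by (induction xs) (auto simp: gprod_def)

lemma gprod_append:
  "set xs \<subseteq> carrier G \<Longrightarrow> set ys \<subseteq> carrier G \<Longrightarrow> gprod G (xs @ ys) = gprod G xs \<otimes> gprod G ys"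
  by (induction xs) (auto simp: gprod_def m_assoc gprod_closed[unfolded gprod_def])

lemma gprod_snoc:
  "set xs \<subseteq> carrier G \<Longrightarrow> x \<in> carrier G \<Longrightarrow> gprod G (xs @ [x]) = gprod G xs \<otimes> x"
  by (simp add: gprod_append) (simp add: gprod_def)

lemma gprod_telescope:
  assumes "\<And>i. i \<le> n \<Longrightarrow> k i \<in> carrier G" and "\<And>i. i < n \<Longrightarrow> g i \<in> carrier G"
  shows "gprod G (map (\<lambda>i. inv (k i) \<otimes> g i \<otimes> k (Suc i)) [0..<n])
       = inv (k 0) \<otimes> gprod G (map g [0..<n]) \<otimes> k n"
  using assms
proof (induction n)
  case 0
  then show ?case by (simp add: gprod_def)
next
  case (Suc n)
  let ?t = "\<lambda>i. inv (k i) \<otimes> g i \<otimes> k (Suc i)"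
  have t_closed: "set (map ?t [0..<n]) \<subseteq> carrier G" "?t n \<in> carrier G"
    and g_closed: "set (map g [0..<n]) \<subseteq> carrier G" "g n \<in> carrier G"
    using Suc.prems by auto
  have "gprod G (map ?t [0..<Suc n]) = gprod G (map ?t [0..<n]) \<otimes> ?t n"
    using t_closed by (simp add: gprod_snoc)
  also have "\<dots> = inv (k 0) \<otimes> gprod G (map g [0..<n]) \<otimes> k n \<otimes> ?t n"
    using Suc by simp
  also have "\<dots> = inv (k 0) \<otimes> (gprod G (map g [0..<n]) \<otimes> g n) \<otimes> k (Suc n)"
    using Suc.prems gprod_closed[OF g_closed(1)] by (simp add: m_assoc inv_cancel_left)
  also have "\<dots> = inv (k 0) \<otimes> gprod G (map g [0..<Suc n]) \<otimes> k (Suc n)"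
    using g_closed by (simp add: gprod_snoc)
  finally show ?case .
qed

lemma gprod_kilian_twist:
  assumes "set gs \<subseteq> carrier G" and "\<And>j. j \<le> length gs \<Longrightarrow> k j \<in> carrier G"
  shows "gprod G (kilian_twist G gs k) = inv (k 0) \<otimes> gprod G gs \<otimes> k (length gs)"
  using gprod_telescope[of "length gs" k "(!) gs"] assms
  by (simp add: kilian_twist_def map_nth subset_code(1))

lemma kilian_twist_closed:
  assumes "set gs \<subseteq> carrier G" and "\<And>j. j \<le> length gs \<Longrightarrow> k j \<in> carrier G"
  shows "set (kilian_twist G gs k) \<subseteq> carrier G"
proof -
  have "inv (k i) \<otimes> gs ! i \<otimes> k (Suc i) \<in> carrier G" if "i < length gs" for i
    using assms that by (simp add: subset_code(1))
  then show ?thesis by (auto simp: kilian_twist_def)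
qed

lemma kilian_twist_determined:
  assumes "kilian_twist G gs k = kilian_twist G gs k'" and "k 0 = k' 0"
    and "set gs \<subseteq> carrier G"
    and "\<And>j. j \<le> length gs \<Longrightarrow> k j \<in> carrier G" "\<And>j. j \<le> length gs \<Longrightarrow> k' j \<in> carrier G"
  shows "j \<le> length gs \<Longrightarrow> k j = k' j"
proof (induction j)
  case 0
  then show ?case using assms(2) by simp
next
  case (Suc j)
  then have "inv (k j) \<otimes> gs ! j \<otimes> k (Suc j) = inv (k j) \<otimes> gs ! j \<otimes> k' (Suc j)"
    using nth_kilian_twist[of j gs G] assms(1) by (metis Suc_le_lessD Suc_leD)
  then show ?case
    using Suc assms(3-5) by (simp add: subset_code(1))
qed

lemma l_coset_eq_iff:
  assumes "subgroup H G" "x \<in> carrier G" "y \<in> carrier G"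
  shows "x <#\<^bsub>G\<^esub> H = y <#\<^bsub>G\<^esub> H \<longleftrightarrow> inv x \<otimes> y \<in> H"
proof -
  have "x <#\<^bsub>G\<^esub> H = y <#\<^bsub>G\<^esub> H \<longleftrightarrow> (x, y) \<in> rcong H"
    using assms by (simp only: subgroup.l_coset_eq_rcong[OF assms(1) is_group]
        eq_equiv_class_iff[OF subgroup.equiv_rcong[OF assms(1) is_group]])
  then show ?thesis
    using assms by (simp add: r_congruent_def)
qed

end

(* A mask hs holds h_1, ..., h_(n-1) as hs 0, ..., hs (n - 2); its default value 1 at index n - 1
  provides the last connector k_n = 1 of case_nat k_0 hs. *)
definition kilian_masks :: "('g, 'b) monoid_scheme \<Rightarrow> 'g set \<Rightarrow> nat \<Rightarrow> (nat \<Rightarrow> 'g) set" where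
  "kilian_masks G H n = PiE_dflt {..<n - 1} \<one>\<^bsub>G\<^esub> (\<lambda>_. H)"

context subgroup
begin

lemma kilian_mask_closed: "hs \<in> kilian_masks G H n \<Longrightarrow> hs i \<in> H"
  by (cases "i < n - 1") (auto simp: kilian_masks_def PiE_dflt_def)

lemma kilian_mask_outside: "hs \<in> kilian_masks G H n \<Longrightarrow> n - 1 \<le> i \<Longrightarrow> hs i = \<one>\<^bsub>G\<^esub>"
  by (auto simp: kilian_masks_def PiE_dflt_def)

lemma finite_kilian_masks: "finite H \<Longrightarrow> finite (kilian_masks G H n)"
  unfolding kilian_masks_def dflt_image_PiE[symmetric] by (intro finite_imageI finite_PiE) auto

lemma kilian_masks_not_empty: "kilian_masks G H n \<noteq> {}"
proof -
  have "(\<lambda>_. \<one>\<^bsub>G\<^esub>) \<in> kilian_masks G H n"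
    using one_closed by (simp add: kilian_masks_def PiE_dflt_def)
  then show ?thesis
    by blast
qed

lemma case_nat_kilian_mask:
  assumes "k0 \<in> H" "hs \<in> kilian_masks G H n"
  shows "case_nat k0 hs j \<in> H" and "0 < n \<Longrightarrow> case_nat k0 hs n = \<one>\<^bsub>G\<^esub>"
  using assms kilian_mask_closed kilian_mask_outside by (auto split: nat.split)

end

lemma (in group) kilian_eq_map_kilian_twist:
  assumes "subgroup H G" "finite H" "set gs \<subseteq> carrier G"
  shows "kilian G H gs
       = map_pmf (\<lambda>hs. kilian_twist G gs (case_nat \<one> hs)) (pmf_of_set (kilian_masks G H (length gs)))"
proof -
  let ?M = "kilian_masks G H (length gs)"
  let ?kil = "\<lambda>hs. map (\<lambda>i. if i = 0 then gs ! 0 \<otimes> hs 0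
      else if i = length gs - 1 then inv (hs (i - 1)) \<otimes> gs ! i
      else inv (hs (i - 1)) \<otimes> gs ! i \<otimes> hs i) [0..<length gs]"
  have uniform: "Pi_pmf {..<length gs - 1} \<one> (\<lambda>_. pmf_of_set H) = pmf_of_set ?M"
    unfolding kilian_masks_def using assms(1,2) subgroup.one_closed by (intro Pi_pmf_of_set) auto
  have "finite ?M" "?M \<noteq> {}"
    using subgroup.finite_kilian_masks[OF assms(1,2)] subgroup.kilian_masks_not_empty[OF assms(1)] by auto
  moreover have "?kil hs = kilian_twist G gs (case_nat \<one> hs)" if hs: "hs \<in> ?M" for hs
  proof (rule nth_equalityI)
    fix i
    assume "i < length (?kil hs)"
    then have i: "i < length gs"
      by simp
    have closed: "gs ! i \<in> carrier G" "hs (i - 1) \<in> carrier G" "hs i \<in> carrier G"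
      using i assms(3) subgroup.kilian_mask_closed[OF assms(1) hs] subgroup.subset[OF assms(1)]
      by (auto simp: subset_code(1))
    have last: "hs i = \<one>" if "i = length gs - 1"
      using that subgroup.kilian_mask_outside[OF assms(1) hs] by simp
    consider "i = 0" | j where "i = Suc j" "i = length gs - 1" | j where "i = Suc j" "i \<noteq> length gs - 1"
      by (cases i) auto
    then show "?kil hs ! i = kilian_twist G gs (case_nat \<one> hs) ! i"
      using i closed last by cases auto
  qed simp
  ultimately show ?thesis
    unfolding kilian_def uniform by (intro map_pmf_cong) auto
qed

lemma (in group) kilian_twist_mult_hd:
  assumes "gs \<noteq> []" "set gs \<subseteq> carrier G" "f \<in> carrier G"
  shows "kilian_twist G ((f \<otimes> hd gs) # tl gs) (case_nat \<one> hs) = kilian_twist G gs (case_nat (inv f) hs)"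
    (is "?lhs = ?rhs")
proof (rule nth_equalityI)
  fix i
  assume "i < length ?lhs"
  then show "?lhs ! i = ?rhs ! i"
    using assms by (cases gs; cases i) auto
qed (use assms in simp)

lemma (in group) kilian_mult_hd_eq_map_kilian_twist:
  assumes "subgroup H G" "finite H" "set gs \<subseteq> carrier G" "gs \<noteq> []" "f \<in> carrier G"
  shows "kilian G H ((f \<otimes> hd gs) # tl gs)
       = map_pmf (\<lambda>hs. kilian_twist G gs (case_nat (inv f) hs)) (pmf_of_set (kilian_masks G H (length gs)))"
proof -
  have "set ((f \<otimes> hd gs) # tl gs) \<subseteq> carrier G"
    using assms(3-5) by (cases gs) auto
  then show ?thesis
    using kilian_eq_map_kilian_twist[OF assms(1,2)] kilian_twist_mult_hd[OF assms(4,3,5)] assms(4) by simp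
qed

lemma (in group_action) act_inv_mult_cancel:
  assumes "f \<in> carrier G" "g \<in> carrier G" "x \<in> E"
  shows "\<phi> g (\<phi> (inv (f \<otimes> g)) x) = \<phi> (inv f) x"
proof -
  interpret G: group G
    using group_hom group_hom.axioms(1) by blast
  have "g \<otimes> inv (f \<otimes> g) = inv f"
    using assms(1,2) by (simp add: G.inv_mult_group G.inv_cancel_left)
  then show ?thesis
    using assms composition_rule[of x g "inv (f \<otimes> g)"] by simp
qed

context normal
begin

lemma gprod_kilian_twist_mask:
  assumes "f \<in> H" "hs \<in> kilian_masks G H (length gs)" "set gs \<subseteq> carrier G" "gs \<noteq> []"
  shows "gprod G (kilian_twist G gs (case_nat (inv f) hs)) = f \<otimes> gprod G gs"
proof -
  have "case_nat (inv f) hs j \<in> carrier G" for j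
    using case_nat_kilian_mask(1)[OF m_inv_closed[OF assms(1)] assms(2)] by auto
  then show ?thesis
    using assms gprod_closed[OF assms(3)]
    by (simp add: gprod_kilian_twist case_nat_kilian_mask(2)[OF m_inv_closed[OF assms(1)] assms(2)])
qed

lemma kilian_twist_l_coset:
  assumes "i < length gs" "gs ! i \<in> carrier G" "k i \<in> H" "k (Suc i) \<in> H"
  shows "kilian_twist G gs k ! i <#\<^bsub>G\<^esub> H = gs ! i <#\<^bsub>G\<^esub> H"
proof -
  have k_closed: "k i \<in> carrier G" "k (Suc i) \<in> carrier G"
    using assms(3,4) by auto
  have "inv (gs ! i) \<otimes> kilian_twist G gs k ! i = inv (gs ! i) \<otimes> inv (k i) \<otimes> gs ! i \<otimes> k (Suc i)"
    using assms(1,2) k_closed by (simp add: m_assoc)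
  also have "\<dots> \<in> H"
    using inv_op_closed1[OF assms(2) m_inv_closed[OF assms(3)]] assms(4) by simp
  finally have "gs ! i <#\<^bsub>G\<^esub> H = kilian_twist G gs k ! i <#\<^bsub>G\<^esub> H"
    using assms k_closed by (simp add: l_coset_eq_iff[OF subgroup_axioms])
  then show ?thesis ..
qed

lemma kilian_twist_exists:
  assumes "set gs \<subseteq> carrier G" "set gs' \<subseteq> carrier G" "length gs' = length gs"
    and "\<And>i. i < length gs \<Longrightarrow> gs' ! i <#\<^bsub>G\<^esub> H = gs ! i <#\<^bsub>G\<^esub> H"
    and "k0 \<in> H"
  obtains k where "k 0 = k0" "\<And>j. j \<le> length gs \<Longrightarrow> k j \<in> H" "gs' = kilian_twist G gs k"
proof -
  define k where "k = rec_nat k0 (\<lambda>i r. inv (gs ! i) \<otimes> r \<otimes> gs' ! i)"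
  have k_Suc: "k (Suc i) = inv (gs ! i) \<otimes> k i \<otimes> gs' ! i" for i
    by (simp add: k_def)
  have k_H: "k j \<in> H" if "j \<le> length gs" for j
    using that
  proof (induction j)
    case 0
    then show ?case by (simp add: k_def assms(5))
  next
    case (Suc j)
    then have closed: "gs ! j \<in> carrier G" "gs' ! j \<in> carrier G" "k j \<in> carrier G"
      using assms(1-3) by (auto simp: subset_code(1))
    have "k (Suc j) = (inv (gs ! j) \<otimes> k j \<otimes> gs ! j) \<otimes> (inv (gs ! j) \<otimes> gs' ! j)"
      using closed by (simp add: k_Suc m_assoc inv_cancel_left)
    also have "\<dots> \<in> H"
      using Suc closed assms(4)[of j] inv_op_closed1[OF closed(1)]
      by (simp add: l_coset_eq_iff[OF subgroup_axioms, symmetric])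
    finally show ?case .
  qed
  have "gs' = kilian_twist G gs k"
  proof (rule nth_equalityI)
    fix i
    assume "i < length gs'"
    then have closed: "gs ! i \<in> carrier G" "gs' ! i \<in> carrier G" "k i \<in> carrier G"
      using assms(1-3) k_H by (auto simp: subset_code(1))
    then show "gs' ! i = kilian_twist G gs k ! i"
      using \<open>i < length gs'\<close> assms(3) by (simp add: k_Suc m_assoc inv_cancel_left inv_cancel_left')
  qed (simp add: assms(3))
  moreover have "k 0 = k0"
    by (simp add: k_def)
  ultimately show thesis
    using that k_H by blast
qed

lemma kilian_twist_mask_in_kil_tuples:
  assumes "subgroup F G" "F \<subseteq> H" "set gs \<subseteq> carrier G" "gs \<noteq> []"
    and "f \<in> F" "hs \<in> kilian_masks G H (length gs)"
  shows "kilian_twist G gs (case_nat (inv f) hs) \<in> kil_tuples G F H gs"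
proof -
  let ?k = "case_nat (inv f) hs"
  have k_H: "?k j \<in> H" for j
    using assms case_nat_kilian_mask(1) by blast
  have "gprod G (kilian_twist G gs ?k) \<in> F #> gprod G gs"
    using assms gprod_kilian_twist_mask[of f hs gs] unfolding r_coset_def by blast
  moreover have "kilian_twist G gs ?k ! i <#\<^bsub>G\<^esub> H = gs ! i <#\<^bsub>G\<^esub> H" if "i < length gs" for i
    using that assms(3) k_H[of i] k_H[of "Suc i"] by (intro kilian_twist_l_coset) (auto simp: subset_code(1))
  moreover have "set (kilian_twist G gs ?k) \<subseteq> carrier G"
    using assms(3) k_H by (intro kilian_twist_closed) auto
  ultimately show ?thesis
    unfolding kil_tuples_def by simp
qed

lemma kilian_twist_mask_inject:
  assumes "subgroup F G" "F \<subseteq> H" "set gs \<subseteq> carrier G" "gs \<noteq> []"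
    and f: "f \<in> F" "f' \<in> F"
    and hs: "hs \<in> kilian_masks G H (length gs)" "hs' \<in> kilian_masks G H (length gs)"
    and eq: "kilian_twist G gs (case_nat (inv f) hs) = kilian_twist G gs (case_nat (inv f') hs')"
  shows "f = f' \<and> hs = hs'"
proof
  have f_H: "f \<in> H" "f' \<in> H"
    using f assms(2) by auto
  then have "f \<otimes> gprod G gs = f' \<otimes> gprod G gs"
    using gprod_kilian_twist_mask[OF f_H(1) hs(1) assms(3,4)]
      gprod_kilian_twist_mask[OF f_H(2) hs(2) assms(3,4)] eq by simp
  then show f_eq: "f = f'"
    using f_H gprod_closed[OF assms(3)] by simp
  have k_closed: "case_nat (inv f) hs j \<in> carrier G" "case_nat (inv f) hs' j \<in> carrier G" for j
    using case_nat_kilian_mask(1)[OF m_inv_closed[OF f_H(1)] hs(1)]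
      case_nat_kilian_mask(1)[OF m_inv_closed[OF f_H(1)] hs(2)] by auto
  have "case_nat (inv f) hs j = case_nat (inv f) hs' j" if "j \<le> length gs" for j
    using kilian_twist_determined[where k = "case_nat (inv f) hs" and k' = "case_nat (inv f) hs'"]
      eq[folded f_eq] assms(3) k_closed that by simp
  from this[of "Suc i" for i] have inside: "hs i = hs' i" if "i < length gs - 1" for i
    using that by simp
  show "hs = hs'"
  proof (rule ext)
    fix i
    show "hs i = hs' i"
      using inside kilian_mask_outside[OF hs(1)] kilian_mask_outside[OF hs(2)]
      by (cases "i < length gs - 1") auto
  qed
qed

lemma kil_tuples_subset_kilian_twist_mask:
  assumes "subgroup F G" "F \<subseteq> H" "set gs \<subseteq> carrier G" "gs \<noteq> []"
    and "gs' \<in> kil_tuples G F H gs"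
  obtains f hs where "f \<in> F" "hs \<in> kilian_masks G H (length gs)"
    "gs' = kilian_twist G gs (case_nat (inv f) hs)"
proof -
  have gs': "length gs' = length gs" "set gs' \<subseteq> carrier G"
    "\<And>i. i < length gs \<Longrightarrow> gs' ! i <#\<^bsub>G\<^esub> H = gs ! i <#\<^bsub>G\<^esub> H"
    using assms(5) by (auto simp: kil_tuples_def)
  obtain f where f: "f \<in> F" and prod: "gprod G gs' = f \<otimes> gprod G gs"
    using assms(5) by (auto simp: kil_tuples_def r_coset_def)
  have f_closed: "f \<in> carrier G"
    using f assms(2) by auto
  obtain k where k: "k 0 = inv f" "\<And>j. j \<le> length gs \<Longrightarrow> k j \<in> H"
    and twist: "gs' = kilian_twist G gs k"
    using kilian_twist_exists[OF assms(3) gs'(2,1) gs'(3)] f assms(2) by blast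
  have "f \<otimes> gprod G gs \<otimes> k (length gs) = f \<otimes> gprod G gs"
    using gprod_kilian_twist[OF assms(3), of k] k prod twist f_closed by auto
  then have k_last: "k (length gs) = \<one>"
    using f_closed gprod_closed[OF assms(3)] k(2)[of "length gs"] by simp
  define hs where "hs i = (if i < length gs - 1 then k (Suc i) else \<one>)" for i
  have "hs \<in> kilian_masks G H (length gs)"
    unfolding kilian_masks_def PiE_dflt_def hs_def using k(2) by simp
  moreover have "gs' = kilian_twist G gs (case_nat (inv f) hs)"
  proof (unfold twist, intro kilian_twist_cong)
    fix j
    assume j: "j \<le> length gs"
    show "k j = case_nat (inv f) hs j"
    proof (cases j)
      case (Suc i)
      show ?thesis
      proof (cases "i < length gs - 1")
        case False
        then have "j = length gs"
          using Suc j by arith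
        then have "k j = \<one>"
          using k_last by simp
        then show ?thesis
          using False Suc by (simp add: hs_def)
      qed (simp add: Suc hs_def)
    qed (simp add: k(1))
  qed
  ultimately show thesis
    using that f by blast
qed

lemma bij_betw_kilian_twist_mask:
  assumes "subgroup F G" "F \<subseteq> H" "set gs \<subseteq> carrier G" "gs \<noteq> []"
  shows "bij_betw (\<lambda>(f, hs). kilian_twist G gs (case_nat (inv f) hs))
           (F \<times> kilian_masks G H (length gs)) (kil_tuples G F H gs)"
proof (rule bij_betw_imageI)
  show "inj_on (\<lambda>(f, hs). kilian_twist G gs (case_nat (inv f) hs)) (F \<times> kilian_masks G H (length gs))"
    using kilian_twist_mask_inject[OF assms] by (auto intro!: inj_onI)
  show "(\<lambda>(f, hs). kilian_twist G gs (case_nat (inv f) hs)) ` (F \<times> kilian_masks G H (length gs))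
      = kil_tuples G F H gs" (is "?A = _")
  proof
    show "?A \<subseteq> kil_tuples G F H gs"
      using kilian_twist_mask_in_kil_tuples[OF assms] by auto
    show "kil_tuples G F H gs \<subseteq> ?A"
    proof
      fix gs'
      assume "gs' \<in> kil_tuples G F H gs"
      then obtain f hs where "f \<in> F" "hs \<in> kilian_masks G H (length gs)"
        "gs' = kilian_twist G gs (case_nat (inv f) hs)"
        by (rule kil_tuples_subset_kilian_twist_mask[OF assms])
      then show "gs' \<in> ?A"
        by force
    qed
  qed
qed

end

definition normalized_output :: "('g, 'b) monoid_scheme \<Rightarrow> ('g \<Rightarrow> 's \<Rightarrow> 's) \<Rightarrow> ('g list \<Rightarrow> 's pmf)
    \<Rightarrow> 'g list \<Rightarrow> 's pmf" where
  "normalized_output G act A gs = map_pmf (act (inv\<^bsub>G\<^esub> (gprod G gs))) (A gs)"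

lemma algB_eq_bind_kilian_twist:
  assumes "group_action G S act" "H \<lhd> G" "finite H" "subgroup F G" "F \<subseteq> H"
    and "\<And>xs. set xs \<subseteq> carrier G \<Longrightarrow> set_pmf (A xs) \<subseteq> S"
    and "set gs \<subseteq> carrier G" "gs \<noteq> []"
  shows "algB G F H act A gs = pmf_of_set F \<bind> (\<lambda>f. pmf_of_set (kilian_masks G H (length gs)) \<bind>
           (\<lambda>hs. map_pmf (act (gprod G gs))
                   (normalized_output G act A (kilian_twist G gs (case_nat (inv\<^bsub>G\<^esub> f) hs)))))"
  unfolding algB_def
proof (rule bind_pmf_cong[OF refl])
  interpret normal H G by (rule assms(2))
  interpret group_action G S act by (rule assms(1))
  let ?M = "kilian_masks G H (length gs)"
  fix f
  assume "f \<in> set_pmf (pmf_of_set F)"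
  moreover have "finite F" "F \<noteq> {}"
    using finite_subset[OF assms(5,3)] subgroup.one_closed[OF assms(4)] by auto
  ultimately have f: "f \<in> H" "f \<in> carrier G"
    using assms(5) subgroup.one_closed[OF assms(4)] subset by auto
  let ?twist = "\<lambda>hs. kilian_twist G gs (case_nat (inv\<^bsub>G\<^esub> f) hs)"
  have "map_pmf (act (inv\<^bsub>G\<^esub> f)) (A (?twist hs))
      = map_pmf (act (gprod G gs)) (normalized_output G act A (?twist hs))" if "hs \<in> ?M" for hs
    unfolding normalized_output_def map_pmf_comp
  proof (intro map_pmf_cong refl)
    fix x
    assume x: "x \<in> set_pmf (A (?twist hs))"
    have "set (?twist hs) \<subseteq> carrier G"
      using assms(7) case_nat_kilian_mask(1)[OF m_inv_closed[OF f(1)] that] by (intro kilian_twist_closed) auto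
    then have "x \<in> S"
      using x assms(6) by blast
    then show "act (inv\<^bsub>G\<^esub> f) x = act (gprod G gs) (act (inv\<^bsub>G\<^esub> (gprod G (?twist hs))) x)"
      using act_inv_mult_cancel[OF f(2) gprod_closed[OF assms(7)]]
        gprod_kilian_twist_mask[OF f(1) that assms(7,8)] by simp
  qed
  then show "kilian G H ((f \<otimes>\<^bsub>G\<^esub> hd gs) # tl gs) \<bind> (\<lambda>gs'. map_pmf (act (inv\<^bsub>G\<^esub> f)) (A gs'))
      = pmf_of_set ?M \<bind> (\<lambda>hs. map_pmf (act (gprod G gs)) (normalized_output G act A (?twist hs)))"
    unfolding kilian_mult_hd_eq_map_kilian_twist[OF subgroup_axioms assms(3,7,8) f(2)] bind_map_pmf
    using finite_kilian_masks[OF assms(3)] kilian_masks_not_empty by (intro bind_pmf_cong) auto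
qed

theorem mainTheorem7:
  fixes G :: "('g, 'b) monoid_scheme" and S :: "'s set" and act :: "'g \<Rightarrow> 's \<Rightarrow> 's"
    and F H :: "'g set" and A :: "'g list \<Rightarrow> 's pmf" and gs :: "'g list"
  assumes "group G" and "finite (carrier G)"
    and "group_action G S act"
    and "subgroup F G" and "F \<subseteq> H" and "H \<lhd> G"
    and "\<And>xs. set xs \<subseteq> carrier G \<Longrightarrow> set_pmf (A xs) \<subseteq> S"
    and "length gs \<ge> 2" and "set gs \<subseteq> carrier G"
  shows "algB G F H act A gs = map_pmf (act (gprod G gs)) (distD G F H act A gs)"
proof -
  interpret normal H G by (rule assms(6))
  have gs: "gs \<noteq> []"
    using assms(8) by auto
  have finite: "finite H" "finite F"
    using finite_subset[OF subset assms(2)] finite_subset[OF assms(5)] by auto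
  have "algB G F H act A gs = pmf_of_set F \<bind> (\<lambda>f. pmf_of_set (kilian_masks G H (length gs)) \<bind>
          (\<lambda>hs. map_pmf (act (gprod G gs))
                  (normalized_output G act A (kilian_twist G gs (case_nat (inv\<^bsub>G\<^esub> f) hs)))))"
    using algB_eq_bind_kilian_twist[OF assms(3,6) finite(1) assms(4,5,7,9) gs] .
  also have "\<dots> = pmf_of_set (kil_tuples G F H gs)
      \<bind> (\<lambda>gs'. map_pmf (act (gprod G gs)) (normalized_output G act A gs'))"
    using bij_betw_kilian_twist_mask[OF assms(4,5,9) gs] finite finite_kilian_masks kilian_masks_not_empty
      subgroup.one_closed[OF assms(4)]
    by (intro bind_pmf_of_set_bij_betw[where g = "\<lambda>f hs. kilian_twist G gs (case_nat (inv\<^bsub>G\<^esub> f) hs)"]) auto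
  also have "\<dots> = map_pmf (act (gprod G gs)) (distD G F H act A gs)"
    by (simp add: distD_def normalized_output_def map_bind_pmf)
  finally show ?thesis .
qed

end
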